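(* Let $X=X_1\times\cdots\times X_n$ be finite, $S=\{1,\ldots,n\}$, and $\varrho(\mathcal{C})\ge0$ for $\mathcal{C}\in\boldsymbol{P}(S)$. Consider the chemical reaction network (a multiset of reactions with species set $X$) consisting of the reactions \[ \sum_{j=1}^{|\mathcal{C}|} x^{(j)} \xrightarrow{\ \varrho(\mathcal{C})/|\mathcal{C}|\ } \sum_{j=1}^{|\mathcal{C}|}\ \bigsqcup_{i=1}^{|\mathcal{C}|}\pi_{C_i}\big(x^{(i+j-1)}\big), \] one for every $\mathcal{C}=\{C_1,\ldots,C_{|\mathcal{C}|}\}\in\boldsymbol{P}(S)$ and every ordered tuple $(x^{(1)},\ldots,x^{(|\mathcal{C}|)})\in X^{|\mathcal{C}|}$ (indices modulo $|\mathcal{C}|$). After discarding the reactions whose substrate complex equals their product complex, this network is strongly reversible: it can be partitioned into pairs, each consisting of a reaction $r_1+\cdots+r_m\xrightarrow{\kappa}s_1+\cdots+s_m$ together with its backward reaction $s_1+\cdots+s_m\xrightarrow{\kappa}r_1+\cdots+r_m$ with the same reaction constant $\kappa$.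
   Context: $\boldsymbol{P}(S)$ is the set of partitions of $S$; blocks are enumerated so that $C_1\ni 1$ and $C_k$ contains the smallest element not in $C_1\cup\cdots\cup C_{k-1}$. $\pi_A$ is the coordinate projection onto the sites in $A$, and $\sqcup$ joins sequence fragments on disjoint site sets into one sequence respecting site positions ($y^{(1)}\sqcup\cdots\sqcup y^{(k)}$ has entry $y^{(j)}_i$ at site $i\in U_j$, where $y^{(j)}$ is indexed by $U_j$). Complexes are formal sums (multisets) of elements of $X$. *)

theory Defs
  imports "HOL-Library.Multiset" "HOL-Library.Disjoint_Sets" Complex_Main
begin

text \<open>Sites are S = {1..n}; a sequence x in X = X_1 x ... x X_n is an extensional
  function on {1..n} (value undefined outside), i.e. an element of PiE {1..n} Xs.\<close>

definition seq_space :: "nat \<Rightarrow> (nat \<Rightarrow> 'a set) \<Rightarrow> (nat \<Rightarrow> 'a) set" where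
  "seq_space n Xs = PiE {1..n} Xs"

text \<open>Enumerated partition: the list of blocks C_1,...,C_k of a partition of S,
  enumerated so that C_1 contains the least element and C_k contains the least
  element not in earlier blocks, i.e. ordered by strictly increasing minima.\<close>

definition enum_partition :: "nat set \<Rightarrow> nat set list \<Rightarrow> bool" where
  "enum_partition S Cs \<longleftrightarrow> partition_on S (set Cs) \<and> distinct Cs \<and> sorted_wrt (<) (map Min Cs)"

definition proj :: "nat set \<Rightarrow> (nat \<Rightarrow> 'a) \<Rightarrow> (nat \<Rightarrow> 'a)" where
  "proj A x = restrict x A"

definition join :: "nat set list \<Rightarrow> (nat \<Rightarrow> 'a) list \<Rightarrow> (nat \<Rightarrow> 'a)" where
  "join Cs ys = (\<lambda>s. if (\<exists>i<length Cs. s \<in> Cs ! i)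
                     then (ys ! (THE i. i < length Cs \<and> s \<in> Cs ! i)) s else undefined)"

type_synonym 'a reaction = "(nat \<Rightarrow> 'a) multiset \<times> (nat \<Rightarrow> 'a) multiset \<times> real"

text \<open>The reaction for the enumerated partition Cs (k blocks) and tuple xs = (x^(1),...,x^(k)),
  0-based: substrate sum_j x^(j); product sum_j join_i pi_{C_i}(x^(i+j mod k)).\<close>
definition recomb_reaction :: "(nat set set \<Rightarrow> real) \<Rightarrow> nat set list \<Rightarrow> (nat \<Rightarrow> 'a) list \<Rightarrow> 'a reaction" where
  "recomb_reaction \<rho> Cs xs =
     (let k = length Cs in
      (mset xs,
       mset (map (\<lambda>j. join Cs (map (\<lambda>i. proj (Cs ! i) (xs ! ((i + j) mod k))) [0..<k])) [0..<k]),
       \<rho> (set Cs) / real k))"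

definition recomb_index :: "nat \<Rightarrow> (nat \<Rightarrow> 'a set) \<Rightarrow> (nat set list \<times> (nat \<Rightarrow> 'a) list) set" where
  "recomb_index n Xs = {(Cs, xs). enum_partition {1..n} Cs \<and> length xs = length Cs \<and> set xs \<subseteq> seq_space n Xs}"

definition recomb_network :: "nat \<Rightarrow> (nat \<Rightarrow> 'a set) \<Rightarrow> (nat set set \<Rightarrow> real) \<Rightarrow> 'a reaction multiset" where
  "recomb_network n Xs \<rho> = image_mset (\<lambda>(Cs, xs). recomb_reaction \<rho> Cs xs) (mset_set (recomb_index n Xs))"

definition backward :: "'b multiset \<times> 'b multiset \<times> real \<Rightarrow> 'b multiset \<times> 'b multiset \<times> real" where
  "backward r = (case r of (s, p, \<kappa>) \<Rightarrow> (p, s, \<kappa>))"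

definition strongly_reversible :: "('b multiset \<times> 'b multiset \<times> real) multiset \<Rightarrow> bool" where
  "strongly_reversible N \<longleftrightarrow> (\<exists>M. N = M + image_mset backward M)"

definition discard_trivial :: "('b multiset \<times> 'b multiset \<times> real) multiset \<Rightarrow> ('b multiset \<times> 'b multiset \<times> real) multiset" where
  "discard_trivial N = filter_mset (\<lambda>(s, p, \<kappa>). s \<noteq> p) N"

end

theory Submission
  imports Defs
begin

text \<open>Fix an enumerated partition with blocks C_0, ..., C_(k-1) and a tuple x_0, ..., x_(k-1),
  indices taken mod k. The j-th product of its reaction agrees with x_(i+j) on C_i. Hence the
  tuple z whose m-th entry is the (-m)-th product has as j-th product the sequence agreeing with
  x_(-j) on every block: the reaction of z is the backward reaction of x, with the same partition
  and rate, and x |-> z is an involution. So reversing all reactions permutes the network, and a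
  multiset invariant under a fixed-point-free involution splits into pairs {r, backward r}.\<close>

lemma neg_mod_neg_mod:
  fixes k m :: nat
  assumes "m < k"
  shows "(k - (k - m) mod k) mod k = m"
  using assms by (cases "m = 0") auto

lemma add_neg_mod_add:
  fixes i j k :: nat
  assumes "i < k" "j < k"
  shows "(i + (k - (i + j) mod k) mod k) mod k = (k - j) mod k"
proof (cases "i + j < k")
  case True
  then show ?thesis using assms by (cases "i + j = 0") auto
next
  case False
  then have "(i + j) mod k = i + j - k" using assms by (simp add: le_mod_geq)
  then show ?thesis using assms False by (cases "i + j = k") (auto simp: le_mod_geq)
qed

lemma image_mset_mset_set_involution:
  assumes "\<And>x. x \<in> A \<Longrightarrow> g x \<in> A" and "\<And>x. x \<in> A \<Longrightarrow> g (g x) = x"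
  shows "image_mset g (mset_set A) = mset_set A"
proof -
  have "inj_on g A" by (rule inj_onI) (metis assms(2))
  moreover have "g ` A = A" using assms by force
  ultimately show ?thesis by (simp add: image_mset_mset_set)
qed

lemma mset_map_neg_mod:
  fixes k :: nat
  shows "mset (map (\<lambda>m. f ((k - m) mod k)) [0..<k]) = mset (map f [0..<k])"
proof -
  have "mset (map (\<lambda>m. f ((k - m) mod k)) [0..<k])
      = image_mset f (image_mset (\<lambda>m. (k - m) mod k) (mset_set {0..<k}))"
    by (simp add: multiset.map_comp comp_def)
  also have "image_mset (\<lambda>m. (k - m) mod k) (mset_set {0..<k}) = mset_set {0..<k}"
    by (rule image_mset_mset_set_involution) (auto simp: neg_mod_neg_mod)
  finally show ?thesis by simp
qed

lemma mset_split_involution: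
  assumes inv: "\<And>x. f (f x) = x"
    and "image_mset f D = D" and "\<And>x. x \<in># D \<Longrightarrow> f x \<noteq> x"
  shows "\<exists>M. D = M + image_mset f M"
  using assms(2,3)
proof (induction "size D" arbitrary: D rule: less_induct)
  case less
  show ?case
  proof (cases "D = {#}")
    case True
    then show ?thesis by simp
  next
    case False
    then obtain r where r: "r \<in># D" by blast
    then have "f r \<in># image_mset f D" by simp
    moreover have "f r \<noteq> r" using less.prems(2) r .
    ultimately have "f r \<in># D - {#r#}" using less.prems(1) by (simp add: in_diff_count)
    then have pair: "{#r, f r#} \<subseteq># D" using r by (simp add: insert_subset_eq_iff)
    define D' where "D' = D - {#r, f r#}"
    have D: "D = D' + {#r, f r#}" unfolding D'_def using pair by (simp only: subset_mset.diff_add)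
    have "image_mset f D' = D'"
      unfolding D'_def image_mset_Diff[OF pair] less.prems(1) by (simp add: inv add_mset_commute)
    moreover have "\<And>x. x \<in># D' \<Longrightarrow> f x \<noteq> x" using less.prems(2) D by auto
    ultimately obtain M where "D' = M + image_mset f M"
      using less.hyps D by fastforce
    then have "D = add_mset r M + image_mset f (add_mset r M)" using D by simp
    then show ?thesis by blast
  qed
qed

lemma backward_backward [simp]: "backward (backward r) = r"
  by (cases r) (simp add: backward_def)

lemma strongly_reversible_discard_trivial:
  assumes "image_mset backward N = N"
  shows "strongly_reversible (discard_trivial N)"
  unfolding strongly_reversible_def
proof (rule mset_split_involution)
  let ?P = "\<lambda>(s, p, \<kappa>). s \<noteq> p"
  have P_backward: "?P (backward r) = ?P r" for r :: "'a multiset \<times> 'a multiset \<times> real"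
    by (cases r) (auto simp: backward_def)
  have "image_mset backward (discard_trivial N) = filter_mset ?P (image_mset backward N)"
    unfolding discard_trivial_def image_mset_filter_mset_swap[symmetric] P_backward ..
  then show "image_mset backward (discard_trivial N) = discard_trivial N"
    unfolding assms by (simp add: discard_trivial_def)
  show "backward r \<noteq> r" if "r \<in># discard_trivial N" for r
    using that by (cases r) (auto simp: discard_trivial_def backward_def)
qed simp

lemma join_nth:
  assumes "disjoint (set Cs)" "distinct Cs" "i < length Cs" "s \<in> Cs ! i"
  shows "join Cs ys s = (ys ! i) s"
proof -
  have "disjoint_family_on ((!) Cs) {..<length Cs}"
  proof (rule disjoint_image_disjoint_family_on)
    have "(!) Cs ` {..<length Cs} = set Cs" by (auto simp: in_set_conv_nth)
    then show "disjoint ((!) Cs ` {..<length Cs})" using assms(1) by simp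
    show "inj_on ((!) Cs) {..<length Cs}" using assms(2) by (simp add: inj_on_nth)
  qed
  then have "(THE i'. i' < length Cs \<and> s \<in> Cs ! i') = i"
    using assms(3,4) by (auto dest: disjoint_family_onD intro!: the_equality)
  then show ?thesis using assms(3,4) by (auto simp: join_def)
qed

lemma join_outside: "s \<notin> \<Union>(set Cs) \<Longrightarrow> join Cs ys s = undefined"
  by (auto simp: join_def)

lemma enum_partition_cover:
  assumes "enum_partition S Cs" "s \<in> S"
  obtains i where "i < length Cs" "s \<in> Cs ! i"
  using assms by (auto simp: enum_partition_def partition_on_def in_set_conv_nth)

definition recombinant :: "nat set list \<Rightarrow> (nat \<Rightarrow> 'a) list \<Rightarrow> nat \<Rightarrow> nat \<Rightarrow> 'a" where
  "recombinant Cs xs j =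
     join Cs (map (\<lambda>i. proj (Cs ! i) (xs ! ((i + j) mod length Cs))) [0..<length Cs])"

lemma recomb_reaction_recombinant:
  "recomb_reaction \<rho> Cs xs =
     (mset xs, mset (map (recombinant Cs xs) [0..<length Cs]), \<rho> (set Cs) / real (length Cs))"
  by (simp add: recomb_reaction_def recombinant_def[abs_def] Let_def)

lemma recombinant_on_block:
  assumes "enum_partition S Cs" "i < length Cs" "s \<in> Cs ! i"
  shows "recombinant Cs xs j s = (xs ! ((i + j) mod length Cs)) s"
proof -
  have "disjoint (set Cs)" "distinct Cs" using assms(1) by (auto simp: enum_partition_def partition_on_def)
  then show ?thesis using assms(2,3) by (simp add: recombinant_def join_nth proj_def)
qed

lemma recombinant_outside:
  assumes "enum_partition S Cs" "s \<notin> S"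
  shows "recombinant Cs xs j s = undefined"
  using assms by (auto simp: recombinant_def enum_partition_def partition_on_def join_outside)

lemma recomb_index_nth_mod:
  assumes "(Cs, xs) \<in> recomb_index n Xs" "Cs \<noteq> []"
  shows "xs ! (t mod length Cs) \<in> seq_space n Xs"
proof -
  have "t mod length Cs < length xs" using assms by (simp add: recomb_index_def)
  then have "xs ! (t mod length Cs) \<in> set xs" by (rule nth_mem)
  then show ?thesis using assms(1) by (auto simp: recomb_index_def)
qed

lemma recombinant_in_seq_space:
  assumes "(Cs, xs) \<in> recomb_index n Xs"
  shows "recombinant Cs xs j \<in> seq_space n Xs"
proof -
  have Cs: "enum_partition {1..n} Cs" using assms by (simp add: recomb_index_def)
  show ?thesis unfolding seq_space_def
  proof (rule PiE_I)
    fix s assume s: "s \<in> {1..n}"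
    obtain i where i: "i < length Cs" "s \<in> Cs ! i" by (rule enum_partition_cover[OF Cs s])
    then have "Cs \<noteq> []" by auto
    then have "xs ! ((i + j) mod length Cs) \<in> PiE {1..n} Xs"
      using recomb_index_nth_mod[OF assms] by (simp add: seq_space_def)
    then show "recombinant Cs xs j s \<in> Xs s"
      unfolding recombinant_on_block[OF Cs i] using s by (rule PiE_mem)
  qed (use Cs recombinant_outside in blast)
qed

definition backward_tuple :: "nat set list \<Rightarrow> (nat \<Rightarrow> 'a) list \<Rightarrow> (nat \<Rightarrow> 'a) list" where
  "backward_tuple Cs xs =
     map (\<lambda>m. recombinant Cs xs ((length Cs - m) mod length Cs)) [0..<length Cs]"

lemma recombinant_backward_tuple:
  assumes "(Cs, xs) \<in> recomb_index n Xs" "j < length Cs"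
  shows "recombinant Cs (backward_tuple Cs xs) j = xs ! ((length Cs - j) mod length Cs)"
proof
  fix s
  let ?k = "length Cs"
  have Cs: "enum_partition {1..n} Cs" using assms(1) by (simp add: recomb_index_def)
  have k: "0 < ?k" using assms(2) by linarith
  show "recombinant Cs (backward_tuple Cs xs) j s = (xs ! ((?k - j) mod ?k)) s"
  proof (cases "s \<in> {1..n}")
    case True
    then obtain i where i: "i < ?k" "s \<in> Cs ! i" by (rule enum_partition_cover[OF Cs])
    have "recombinant Cs (backward_tuple Cs xs) j s = (backward_tuple Cs xs ! ((i + j) mod ?k)) s"
      by (rule recombinant_on_block[OF Cs i])
    also have "\<dots> = recombinant Cs xs ((?k - (i + j) mod ?k) mod ?k) s"
      using k by (simp only: backward_tuple_def length_upt nth_map_upt mod_less_divisor diff_zero add_0)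
    also have "\<dots> = (xs ! ((i + (?k - (i + j) mod ?k) mod ?k) mod ?k)) s"
      by (rule recombinant_on_block[OF Cs i])
    finally show ?thesis unfolding add_neg_mod_add[OF i(1) assms(2)] .
  next
    case False
    have "Cs \<noteq> []" using k by simp
    then have "xs ! ((?k - j) mod ?k) \<in> PiE {1..n} Xs"
      using recomb_index_nth_mod[OF assms(1)] unfolding seq_space_def by blast
    then have "(xs ! ((?k - j) mod ?k)) s = undefined" using False by (rule PiE_arb)
    then show ?thesis using recombinant_outside[OF Cs False] by simp
  qed
qed

lemma backward_tuple_in_recomb_index:
  assumes "(Cs, xs) \<in> recomb_index n Xs"
  shows "(Cs, backward_tuple Cs xs) \<in> recomb_index n Xs"
  using assms recombinant_in_seq_space[OF assms] by (auto simp: recomb_index_def backward_tuple_def)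

lemma backward_tuple_backward_tuple:
  assumes "(Cs, xs) \<in> recomb_index n Xs"
  shows "backward_tuple Cs (backward_tuple Cs xs) = xs"
proof (rule nth_equalityI)
  show "length (backward_tuple Cs (backward_tuple Cs xs)) = length xs"
    using assms by (simp add: backward_tuple_def recomb_index_def)
  fix m assume "m < length (backward_tuple Cs (backward_tuple Cs xs))"
  then have m: "m < length Cs" by (simp add: backward_tuple_def)
  from m have "0 < length Cs" by linarith
  then have "(length Cs - m) mod length Cs < length Cs" by simp
  then show "backward_tuple Cs (backward_tuple Cs xs) ! m = xs ! m"
    using recombinant_backward_tuple[OF assms] m by (simp add: backward_tuple_def neg_mod_neg_mod)
qed

lemma recomb_reaction_backward_tuple:
  assumes "(Cs, xs) \<in> recomb_index n Xs"
  shows "recomb_reaction \<rho> Cs (backward_tuple Cs xs) = backward (recomb_reaction \<rho> Cs xs)"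
proof -
  let ?k = "length Cs"
  have "mset (map (recombinant Cs (backward_tuple Cs xs)) [0..<?k])
      = mset (map (\<lambda>j. xs ! ((?k - j) mod ?k)) [0..<?k])"
    using recombinant_backward_tuple[OF assms] by (intro arg_cong[where f = mset] map_cong) auto
  also have "\<dots> = mset (map ((!) xs) [0..<?k])" by (rule mset_map_neg_mod)
  also have "\<dots> = mset xs"
  proof -
    have "length Cs = length xs" using assms by (simp add: recomb_index_def)
    then show ?thesis by (simp only: map_nth)
  qed
  finally have "mset (map (recombinant Cs (backward_tuple Cs xs)) [0..<?k]) = mset xs" .
  moreover have "mset (backward_tuple Cs xs) = mset (map (recombinant Cs xs) [0..<?k])"
    unfolding backward_tuple_def by (rule mset_map_neg_mod)
  ultimately show ?thesis by (simp add: recomb_reaction_recombinant backward_def)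
qed

lemma image_mset_backward_recomb_network:
  "image_mset backward (recomb_network n Xs \<rho>) = recomb_network n Xs \<rho>"
proof -
  let ?I = "recomb_index n Xs"
  let ?t = "\<lambda>(Cs, xs). (Cs, backward_tuple Cs xs)"
  let ?r = "\<lambda>(Cs, xs). recomb_reaction \<rho> Cs xs"
  have "image_mset ?t (mset_set ?I) = mset_set ?I"
    by (rule image_mset_mset_set_involution)
      (auto simp: backward_tuple_in_recomb_index backward_tuple_backward_tuple)
  moreover have "image_mset (backward \<circ> ?r) (mset_set ?I) = image_mset (?r \<circ> ?t) (mset_set ?I)"
  proof (cases "finite ?I")
    case True
    then show ?thesis
      by (intro image_mset_cong) (auto simp: recomb_reaction_backward_tuple)
  qed simp
  ultimately show ?thesis
    unfolding recomb_network_def by (simp flip: image_mset.comp)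
qed

theorem theorem3p4:
  fixes n :: nat and Xs :: "nat \<Rightarrow> 'a set" and \<rho> :: "nat set set \<Rightarrow> real"
  assumes "\<And>i. i \<in> {1..n} \<Longrightarrow> finite (Xs i)"
    and "\<And>P. partition_on {1..n} P \<Longrightarrow> \<rho> P \<ge> 0"
  shows "strongly_reversible (discard_trivial (recomb_network n Xs \<rho>))"
  using image_mset_backward_recomb_network by (rule strongly_reversible_discard_trivial)

end
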